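(* Let $(Y,\rho)$ be a metric space, let $\hookrightarrow_*$ be a monotone embedding relation on the subsets of $Y$, let $X$ be a paracompact space, and let $\varphi:X\rightrightarrows Y$ be a $\rho$-continuous set-valued mapping such that each $\varphi(x)$, $x\in X$, is uniformly $UV^*$. Then for every continuous function $\varepsilon:X\to(0,+\infty)$ there exist a sequence $\mathscr{U}_n$, $n<\omega$, of open covers of $X$ and set-valued mappings $\Phi_n,\Psi_n:\mathscr{U}_n\rightrightarrows Y$ such that for every $n<\omega$ and every $U\in\mathscr{U}_n$: (i) $\Phi_n(U)\hookrightarrow_*\Psi_n(U)\subset \mathbf{O}_{\varepsilon(p)}(\varphi(p))$ for every $p\in U$; (ii) $\Psi_k(V)\subset\Phi_n(U)$ whenever $k>n$ and $V\in\mathscr{U}_k$ with $V\cap U\neq\emptyset$.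
   Context: All covers consist of nonempty sets. A set-valued mapping $\varphi:X\rightrightarrows Y$ assigns to each $x\in X$ a nonempty subset $\varphi(x)\subset Y$. For a metric space $(Y,\rho)$, $\mathbf{O}_\varepsilon(y)$ is the open $\varepsilon$-ball about $y$ and $\mathbf{O}_\varepsilon(S)=\bigcup_{q\in S}\mathbf{O}_\varepsilon(q)$ for $S\subset Y$. A mapping $\varphi:X\rightrightarrows Y$ is $\rho$-continuous if for every $\varepsilon>0$ each $x\in X$ has a neighbourhood $V$ with $\varphi(x)\subset\mathbf{O}_\varepsilon(\varphi(p))$ and $\varphi(p)\subset\mathbf{O}_\varepsilon(\varphi(x))$ for all $p\in V$. An embedding relation $\hookrightarrow_*$ on subsets of $Y$ is a relation $S\hookrightarrow_* T$ between subsets with $S\hookrightarrow_*T$ implying $S\subset T$; it is monotone if $A\subset S\hookrightarrow_* T\subset B$ implies $A\hookrightarrow_* B$. A subset $S\subset Y$ is uniformly $UV^*$ if for every $\varepsilon>0$ there is $\delta>0$ with $\mathbf{O}_\delta(S)\hookrightarrow_*\mathbf{O}_\varepsilon(S)$. *)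

theory Defs
  imports "HOL-Analysis.Analysis"
begin

definition paracompact_space :: "'a topology \<Rightarrow> bool" where
  "paracompact_space X \<longleftrightarrow> Hausdorff_space X \<and>
     (\<forall>\<U>. (\<forall>U\<in>\<U>. openin X U) \<and> \<Union>\<U> = topspace X \<longrightarrow>
        (\<exists>\<V>. (\<forall>V\<in>\<V>. openin X V) \<and> \<Union>\<V> = topspace X \<and>
              (\<forall>V\<in>\<V>. \<exists>U\<in>\<U>. V \<subseteq> U) \<and> locally_finite_in X \<V>))"

definition nbhd :: "real \<Rightarrow> 'b::metric_space set \<Rightarrow> 'b set" ("\<^bold>O") where
  "nbhd e S = (\<Union>q\<in>S. ball q e)"

definition embedding_relation :: "('b set \<Rightarrow> 'b set \<Rightarrow> bool) \<Rightarrow> bool" where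
  "embedding_relation R \<longleftrightarrow> (\<forall>S T. R S T \<longrightarrow> S \<subseteq> T)"

definition monotone_embedding :: "('b set \<Rightarrow> 'b set \<Rightarrow> bool) \<Rightarrow> bool" where
  "monotone_embedding R \<longleftrightarrow> embedding_relation R \<and>
     (\<forall>A S T B. A \<subseteq> S \<and> R S T \<and> T \<subseteq> B \<longrightarrow> R A B)"

definition uniformly_UV :: "('b::metric_space set \<Rightarrow> 'b set \<Rightarrow> bool) \<Rightarrow> 'b set \<Rightarrow> bool" where
  "uniformly_UV R S \<longleftrightarrow> (\<forall>e>0. \<exists>d>0. R (nbhd d S) (nbhd e S))"

definition set_valued_on :: "'a topology \<Rightarrow> ('a \<Rightarrow> 'b set) \<Rightarrow> bool" where
  "set_valued_on X \<phi> \<longleftrightarrow> (\<forall>x\<in>topspace X. \<phi> x \<noteq> {})"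

definition rho_continuous :: "'a topology \<Rightarrow> ('a \<Rightarrow> 'b::metric_space set) \<Rightarrow> bool" where
  "rho_continuous X \<phi> \<longleftrightarrow> (\<forall>e>0. \<forall>x\<in>topspace X. \<exists>V. openin X V \<and> x \<in> V \<and>
     (\<forall>p\<in>V. \<phi> x \<subseteq> nbhd e (\<phi> p) \<and> \<phi> p \<subseteq> nbhd e (\<phi> x)))"

definition open_cover :: "'a topology \<Rightarrow> 'a set set \<Rightarrow> bool" where
  "open_cover X \<U> \<longleftrightarrow> (\<forall>U\<in>\<U>. openin X U \<and> U \<noteq> {}) \<and> \<Union>\<U> = topspace X"

end

theory Submission
  imports Defs
begin

text \<open>
  Measure the distance of two points x, y of X by the maximum of the Hausdorff distance of \<phi> x
  and \<phi> y and of |\<epsilon> x - \<epsilon> y|. By \<rho>-continuity of \<phi> and continuity of \<epsilon>, balls of this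
  extended pseudometric d are open in X. The uniform UV* property gives at every x a radius t
  with O_t(\<phi> x) \<hookrightarrow>* O_s(\<phi> x); such radii can be chosen locally uniformly, and an
  inf-convolution makes them 1-Lipschitz with respect to d. Iterating s \<mapsto> t/4 from s = \<epsilon>/2
  yields radii S_0 \<ge> t_0 \<ge> S_1 \<ge> t_1 \<ge> ..., and the n-th cover consists of the d-balls of
  radius t_n(x)/8 about the points x, with \<Phi>_n = O_(t_n(x))(\<phi> x) and \<Psi>_n = O_(S_n(x))(\<phi> x).
  Since the radii are Lipschitz, overlapping balls have comparable radii, which gives the
  nesting (ii).
\<close>

lemma nbhd_mono: "a \<le> b \<Longrightarrow> S \<subseteq> T \<Longrightarrow> nbhd a S \<subseteq> nbhd b T"
  unfolding nbhd_def by fastforce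

lemma nbhd_nbhd: "nbhd a (nbhd b S) \<subseteq> nbhd (b + a) S"
proof
  fix x assume "x \<in> nbhd a (nbhd b S)"
  then obtain q p where "p \<in> S" "dist q p < b" "dist x q < a"
    unfolding nbhd_def by (auto simp: dist_commute)
  then have "dist x p < b + a" using dist_triangle[of x p q] by linarith
  then show "x \<in> nbhd (b + a) S" using \<open>p \<in> S\<close> unfolding nbhd_def by (auto simp: dist_commute)
qed

lemma subset_nbhd: "0 < a \<Longrightarrow> S \<subseteq> nbhd a S"
  unfolding nbhd_def by auto

lemma nbhd_eq_empty_iff: "0 < a \<Longrightarrow> nbhd a S = {} \<longleftrightarrow> S = {}"
  unfolding nbhd_def by auto

lemma nbhd_subset_nbhdI: "S \<subseteq> nbhd a T \<Longrightarrow> nbhd b S \<subseteq> nbhd (a + b) T"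
  using nbhd_mono[of b b S "nbhd a T"] nbhd_nbhd[of b a T] by auto

lemma monotone_embeddingD:
  "monotone_embedding R \<Longrightarrow> A \<subseteq> S \<Longrightarrow> R S T \<Longrightarrow> T \<subseteq> B \<Longrightarrow> R A B"
  unfolding monotone_embedding_def by blast

text \<open>
  \<open>near a x y\<close> stands for \<open>d x y < a\<close>, where d is an extended pseudometric; the relation is
  used instead of d because d may take the value \<infinity>.
\<close>

locale gauge =
  fixes C :: "'a set"
    and near :: "real \<Rightarrow> 'a \<Rightarrow> 'a \<Rightarrow> bool"
  assumes near_pos: "near a x y \<Longrightarrow> 0 < a"
    and near_refl: "0 < a \<Longrightarrow> near a x x"
    and near_sym: "near a x y \<Longrightarrow> near a y x"
    and near_trans: "near a x y \<Longrightarrow> near b y z \<Longrightarrow> near (a + b) x z"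
begin

definition gball :: "real \<Rightarrow> 'a \<Rightarrow> 'a set" where
  "gball r x = {p \<in> C. \<exists>a<r. near a x p}"

definition positive_lipschitz :: "('a \<Rightarrow> real) \<Rightarrow> bool" where
  "positive_lipschitz h \<longleftrightarrow> (\<forall>x\<in>C. 0 < h x) \<and> (\<forall>x\<in>C. \<forall>y\<in>C. \<forall>a. near a x y \<longrightarrow> h x \<le> h y + a)"

lemma centre_in_gball: "0 < r \<Longrightarrow> x \<in> C \<Longrightarrow> x \<in> gball r x"
  unfolding gball_def using near_refl[of "r / 2" x] by (auto intro!: exI[of _ "r / 2"])

lemma gball_overlap:
  assumes "p \<in> gball r x" "p \<in> gball s y"
  shows "\<exists>a<r + s. near a x y"
proof -
  obtain a b where "a < r" "near a x p" "b < s" "near b y p"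
    using assms unfolding gball_def by blast
  then show ?thesis using near_trans[of a x p b y] near_sym by force
qed

lemma positive_lipschitz_pos: "positive_lipschitz h \<Longrightarrow> x \<in> C \<Longrightarrow> 0 < h x"
  unfolding positive_lipschitz_def by blast

lemma positive_lipschitzD:
  "positive_lipschitz h \<Longrightarrow> x \<in> C \<Longrightarrow> y \<in> C \<Longrightarrow> near a x y \<Longrightarrow> h x \<le> h y + a"
  unfolding positive_lipschitz_def by blast

lemma positive_lipschitz_divide:
  assumes h: "positive_lipschitz h" and c: "1 \<le> c"
  shows "positive_lipschitz (\<lambda>x. h x / c)"
  unfolding positive_lipschitz_def
proof (intro conjI ballI allI impI)
  fix x assume "x \<in> C"
  then show "0 < h x / c" using positive_lipschitz_pos[OF h] c by simp
next
  fix x y a assume xy: "x \<in> C" "y \<in> C" and "near a x y"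
  then have "h x \<le> h y + a" "a \<le> c * a" using positive_lipschitzD[OF h] near_pos c by auto
  then show "h x / c \<le> h y / c + a" using c by (simp add: field_simps)
qed

text \<open>The Lipschitz minorant is the inf-convolution \<open>h y = inf\<^sub>z (G z + d y z)\<close>.\<close>

lemma positive_lipschitz_minorant:
  assumes G_pos: "\<forall>x\<in>C. 0 < G x"
    and G_local: "\<forall>x\<in>C. \<exists>r>0. \<exists>c>0. \<forall>p\<in>gball r x. c \<le> G p"
  obtains h where "positive_lipschitz h" "\<forall>x\<in>C. h x \<le> G x"
proof
  define S where "S y = {G z + a | z a. z \<in> C \<and> near a y z}" for y
  define h where "h y = Inf (S y)" for y
  have in_S: "G z + a \<in> S y" if "z \<in> C" "near a y z" for y z a
    using that unfolding S_def by blast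
  have S_cases: "\<exists>z a. v = G z + a \<and> z \<in> C \<and> near a y z" if "v \<in> S y" for v y
    using that unfolding S_def by blast
  have S_pos: "0 < v" if v_in: "v \<in> S y" for v y
  proof -
    obtain z a where "v = G z + a" "z \<in> C" "near a y z" using S_cases[OF v_in] by blast
    moreover have "0 < G z" "0 < a" using calculation G_pos near_pos by auto
    ultimately show ?thesis by simp
  qed
  have bdd: "bdd_below (S y)" for y
    by (rule bdd_belowI[of _ 0]) (simp add: S_pos less_imp_le)
  have nonempty: "S y \<noteq> {}" if "y \<in> C" for y
    using in_S[OF that near_refl[of 1]] by auto
  have h_le: "h y \<le> v" if "v \<in> S y" for v y
    unfolding h_def using that bdd by (rule cInf_lower)
  show "\<forall>y\<in>C. h y \<le> G y"
  proof
    fix y assume y: "y \<in> C"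
    show "h y \<le> G y"
    proof (rule field_le_epsilon)
      fix e :: real assume "0 < e"
      then show "h y \<le> G y + e" using h_le in_S[OF y near_refl] by blast
    qed
  qed
  have "0 < h y" if y: "y \<in> C" for y
  proof -
    obtain r c where "0 < r" "0 < c" and c: "\<forall>p\<in>gball r y. c \<le> G p"
      using G_local y by blast
    have "min r c \<le> v" if v_in: "v \<in> S y" for v
    proof -
      obtain z a where v: "v = G z + a" "z \<in> C" "near a y z" using S_cases[OF v_in] by blast
      have "0 < a" "0 < G z" using v near_pos G_pos by auto
      moreover have "a < r \<Longrightarrow> c \<le> G z" using c v unfolding gball_def by blast
      ultimately show ?thesis unfolding v(1) by linarith
    qed
    then have "min r c \<le> h y" unfolding h_def by (intro cInf_greatest[OF nonempty[OF y]])
    then show ?thesis using \<open>0 < r\<close> \<open>0 < c\<close> by linarith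
  qed
  moreover have "h x \<le> h y + b" if xy: "x \<in> C" "y \<in> C" and "near b x y" for x y b
  proof -
    have "h x - b \<le> v" if v_in: "v \<in> S y" for v
    proof -
      obtain z a where v: "v = G z + a" "z \<in> C" "near a y z" using S_cases[OF v_in] by blast
      then have "h x \<le> G z + (b + a)" using h_le in_S near_trans \<open>near b x y\<close> by blast
      then show ?thesis using v by linarith
    qed
    then have "h x - b \<le> h y" unfolding h_def by (intro cInf_greatest[OF nonempty[OF xy(2)]])
    then show ?thesis by linarith
  qed
  ultimately show "positive_lipschitz h" unfolding positive_lipschitz_def by blast
qed

end

locale UV_setting =
  fixes X :: "'a topology"
    and R :: "'b::metric_space set \<Rightarrow> 'b set \<Rightarrow> bool"
    and \<phi> :: "'a \<Rightarrow> 'b set"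
    and \<epsilon> :: "'a \<Rightarrow> real"
  assumes monotone_R: "monotone_embedding R"
    and \<phi>_nonempty: "set_valued_on X \<phi>"
    and \<phi>_continuous: "rho_continuous X \<phi>"
    and \<phi>_UV: "\<forall>x\<in>topspace X. uniformly_UV R (\<phi> x)"
    and \<epsilon>_continuous: "continuous_map X euclideanreal \<epsilon>"
    and \<epsilon>_pos: "\<forall>x\<in>topspace X. \<epsilon> x > 0"
begin

definition near :: "real \<Rightarrow> 'a \<Rightarrow> 'a \<Rightarrow> bool" where
  "near a x y \<longleftrightarrow> 0 < a \<and> \<phi> x \<subseteq> nbhd a (\<phi> y) \<and> \<phi> y \<subseteq> nbhd a (\<phi> x) \<and> \<bar>\<epsilon> x - \<epsilon> y\<bar> < a"

sublocale gauge "topspace X" near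
proof
  fix a b x y z
  show "near a x y \<Longrightarrow> 0 < a" and "near a x y \<Longrightarrow> near a y x"
    unfolding near_def by auto
  show "0 < a \<Longrightarrow> near a x x" unfolding near_def using subset_nbhd by auto
  assume xy: "near a x y" and yz: "near b y z"
  then have "\<phi> x \<subseteq> nbhd (a + b) (\<phi> z)" "\<phi> z \<subseteq> nbhd (a + b) (\<phi> x)"
    using nbhd_subset_nbhdI[of "\<phi> y" b "\<phi> z" a] nbhd_subset_nbhdI[of "\<phi> y" a "\<phi> x" b]
    unfolding near_def by (auto simp: add.commute)
  then show "near (a + b) x z" using xy yz unfolding near_def by auto
qed

lemma near_nbhd_subset: "near a x y \<Longrightarrow> nbhd b (\<phi> y) \<subseteq> nbhd (b + a) (\<phi> x)"
  using nbhd_subset_nbhdI[of "\<phi> y" a "\<phi> x" b] unfolding near_def by (auto simp: add.commute)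

lemma positive_lipschitz_\<epsilon>: "positive_lipschitz \<epsilon>"
  unfolding positive_lipschitz_def near_def using \<epsilon>_pos by auto

lemma openin_gball: "openin X (gball r x)"
proof (subst openin_subopen, intro ballI)
  fix p assume "p \<in> gball r x"
  then obtain a where a: "a < r" "near a x p" "p \<in> topspace X" unfolding gball_def by blast
  define e where "e = (r - a) / 2"
  have "0 < e" using a unfolding e_def by simp
  then obtain V where V: "openin X V" "p \<in> V"
    "\<forall>q\<in>V. \<phi> p \<subseteq> nbhd e (\<phi> q) \<and> \<phi> q \<subseteq> nbhd e (\<phi> p)"
    using \<phi>_continuous a(3) unfolding rho_continuous_def by meson
  define W where "W = {q \<in> topspace X. \<epsilon> q \<in> ball (\<epsilon> p) e}"
  have "openin X W"
    unfolding W_def using openin_continuous_map_preimage[OF \<epsilon>_continuous, of "ball (\<epsilon> p) e"]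
    by simp
  have "V \<inter> W \<subseteq> gball r x"
  proof
    fix q assume q: "q \<in> V \<inter> W"
    then have "near e p q" using V \<open>0 < e\<close> unfolding near_def W_def by (auto simp: dist_real_def)
    then have "near (a + e) x q" using near_trans a by blast
    moreover have "a + e < r" using a(1) unfolding e_def by (simp add: field_simps)
    ultimately show "q \<in> gball r x" using q unfolding gball_def W_def by auto
  qed
  moreover have "p \<in> V \<inter> W" using V a \<open>0 < e\<close> unfolding W_def by auto
  ultimately show "\<exists>T. openin X T \<and> p \<in> T \<and> T \<subseteq> gball r x"
    using V(1) \<open>openin X W\<close> by blast
qed

definition UV_radius :: "('a \<Rightarrow> real) \<Rightarrow> 'a \<Rightarrow> real \<Rightarrow> bool" where
  "UV_radius s x c \<longleftrightarrow> 0 < c \<and> c \<le> s x / 4 \<and> R (nbhd c (\<phi> x)) (nbhd (s x) (\<phi> x))"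

lemma UV_radius_smaller: "UV_radius s x c \<Longrightarrow> 0 < c' \<Longrightarrow> c' \<le> c \<Longrightarrow> UV_radius s x c'"
  unfolding UV_radius_def
  using monotone_embeddingD[OF monotone_R] nbhd_mono[of c' c "\<phi> x" "\<phi> x"] by auto

text \<open>
  One radius of the UV* property at x, halved, works at all nearby points p: the
  neighbourhoods of \<phi> p are squeezed between neighbourhoods of \<phi> x.
\<close>

lemma UV_radius_local:
  assumes s: "positive_lipschitz s" and x: "x \<in> topspace X"
  shows "\<exists>c>0. \<forall>p\<in>gball c x. UV_radius s p c"
proof -
  have sx: "0 < s x" using positive_lipschitz_pos[OF s x] .
  then obtain \<delta> where "0 < \<delta>" and \<delta>: "R (nbhd \<delta> (\<phi> x)) (nbhd (s x / 2) (\<phi> x))"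
    using \<phi>_UV x unfolding uniformly_UV_def by (meson half_gt_zero)
  define c where "c = min \<delta> (s x / 8) / 2"
  have c: "0 < c" "2 * c \<le> \<delta>" "2 * c \<le> s x / 8"
    using \<open>0 < \<delta>\<close> sx unfolding c_def by auto
  have "UV_radius s p c" if p: "p \<in> gball c x" for p
  proof -
    obtain a where a: "a < c" "near a x p" "p \<in> topspace X"
      using p unfolding gball_def by blast
    have sp: "s x \<le> s p + a" using positive_lipschitzD[OF s x] a by blast
    have "nbhd c (\<phi> p) \<subseteq> nbhd (c + a) (\<phi> x)" using near_nbhd_subset a by blast
    also have "\<dots> \<subseteq> nbhd \<delta> (\<phi> x)" using a c by (intro nbhd_mono) auto
    finally have inner: "nbhd c (\<phi> p) \<subseteq> nbhd \<delta> (\<phi> x)" .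
    have "nbhd (s x / 2) (\<phi> x) \<subseteq> nbhd (s x / 2 + a) (\<phi> p)"
      using near_nbhd_subset near_sym a by blast
    also have "\<dots> \<subseteq> nbhd (s p) (\<phi> p)" using a c sp by (intro nbhd_mono) auto
    finally have outer: "nbhd (s x / 2) (\<phi> x) \<subseteq> nbhd (s p) (\<phi> p)" .
    show ?thesis unfolding UV_radius_def
      using monotone_embeddingD[OF monotone_R inner \<delta> outer] sp a c by auto
  qed
  then show ?thesis using c(1) by blast
qed

text \<open>
  The supremum G of the admissible radii is locally bounded below by the previous lemma, and
  admissible radii are closed downwards; so any Lipschitz minorant of G/2 is admissible.
\<close>

lemma positive_lipschitz_UV_radius:
  assumes s: "positive_lipschitz s"
  obtains t where "positive_lipschitz t" "\<forall>x\<in>topspace X. UV_radius s x (t x)"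
proof -
  define G where "G y = Sup {c. UV_radius s y c}" for y
  have bdd: "bdd_above {c. UV_radius s y c}" for y
    unfolding bdd_above_def UV_radius_def by (intro exI[of _ "s y / 4"]) simp
  have radius_le_G: "c \<le> G y" if "UV_radius s y c" for y c
    unfolding G_def using that by (intro cSup_upper[OF _ bdd]) simp
  have nonempty: "{c. UV_radius s y c} \<noteq> {}" if "y \<in> topspace X" for y
    using UV_radius_local[OF s that] centre_in_gball that by blast
  have G_pos: "0 < G y" if "y \<in> topspace X" for y
    using nonempty[OF that] radius_le_G unfolding UV_radius_def by fastforce
  have below_G: "UV_radius s y c" if y: "y \<in> topspace X" and "0 < c" "c < G y" for y c
  proof -
    obtain c' where "UV_radius s y c'" "c < c'"
      using \<open>c < G y\<close> less_cSup_iff[OF nonempty[OF y] bdd] unfolding G_def by auto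
    then show ?thesis using UV_radius_smaller \<open>0 < c\<close> by auto
  qed
  obtain h where h: "positive_lipschitz h" "\<forall>x\<in>topspace X. h x \<le> G x / 2"
  proof (rule positive_lipschitz_minorant)
    show "\<forall>x\<in>topspace X. 0 < G x / 2" using G_pos by simp
    show "\<forall>x\<in>topspace X. \<exists>r>0. \<exists>c>0. \<forall>p\<in>gball r x. c \<le> G p / 2"
    proof
      fix x assume "x \<in> topspace X"
      then obtain c where "0 < c" "\<forall>p\<in>gball c x. UV_radius s p c"
        using UV_radius_local[OF s] by blast
      then have "\<forall>p\<in>gball c x. c / 2 \<le> G p / 2" using radius_le_G by simp
      then show "\<exists>r>0. \<exists>c>0. \<forall>p\<in>gball r x. c \<le> G p / 2"
        using \<open>0 < c\<close> half_gt_zero by blast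
    qed
  qed
  moreover have "UV_radius s x (h x)" if "x \<in> topspace X" for x
  proof (rule below_G[OF that])
    show "0 < h x" using positive_lipschitz_pos[OF h(1) that] .
    show "h x < G x" using h(2) G_pos[OF that] that by fastforce
  qed
  ultimately show ?thesis using that by blast
qed

lemma radius_sequence:
  obtains S t :: "nat \<Rightarrow> 'a \<Rightarrow> real" where
    "\<And>n x. x \<in> topspace X \<Longrightarrow> S n x \<le> \<epsilon> x / 2"
    "\<And>n. positive_lipschitz (t n)"
    "\<And>n x. x \<in> topspace X \<Longrightarrow> UV_radius (S n) x (t n x)"
    "\<And>n k x. x \<in> topspace X \<Longrightarrow> n < k \<Longrightarrow> S k x \<le> t n x / 4"
proof -
  obtain T where T: "\<And>s. positive_lipschitz s \<Longrightarrow>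
      positive_lipschitz (T s) \<and> (\<forall>x\<in>topspace X. UV_radius s x (T s x))"
    using choice[of "\<lambda>s t. positive_lipschitz s \<longrightarrow>
        positive_lipschitz t \<and> (\<forall>x\<in>topspace X. UV_radius s x (t x))"]
      positive_lipschitz_UV_radius by metis
  define S :: "nat \<Rightarrow> 'a \<Rightarrow> real"
    where "S n = rec_nat (\<lambda>x. \<epsilon> x / 2) (\<lambda>_ s x. T s x / 4) n" for n
  have S_0: "S 0 = (\<lambda>x. \<epsilon> x / 2)" and S_Suc: "S (Suc n) = (\<lambda>x. T (S n) x / 4)" for n
    by (simp_all add: S_def)
  have S: "positive_lipschitz (S n)" for n
    by (induction n)
      (simp_all add: S_0 S_Suc positive_lipschitz_divide positive_lipschitz_\<epsilon> T)
  define t where "t n = T (S n)" for n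
  have t: "positive_lipschitz (t n)" "x \<in> topspace X \<Longrightarrow> UV_radius (S n) x (t n x)" for n x
    using T[OF S] unfolding t_def by auto
  have S_decreasing: "S (Suc n) x \<le> S n x" if "x \<in> topspace X" for n x
    using t(2)[OF that, of n] unfolding S_Suc t_def UV_radius_def by simp
  have "S n x \<le> \<epsilon> x / 2" if "x \<in> topspace X" for n x
  proof (induction n)
    case (Suc n) then show ?case using S_decreasing[OF that, of n] by linarith
  qed (simp add: S_0)
  moreover have "S k x \<le> t n x / 4" if x: "x \<in> topspace X" and "n < k" for n k x
    using Suc_le_eq[THEN iffD2, OF \<open>n < k\<close>]
  proof (induction k rule: dec_induct)
    case base show ?case unfolding S_Suc t_def by simp
  next
    case (step m) then show ?case using S_decreasing[OF x, of m] by linarith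
  qed
  ultimately show ?thesis using that[where S = S and t = t] t by blast
qed

definition ball_cover :: "('a \<Rightarrow> real) \<Rightarrow> 'a set set" where
  "ball_cover r = (\<lambda>x. gball (r x) x) ` topspace X"

definition ball_centre :: "('a \<Rightarrow> real) \<Rightarrow> 'a set \<Rightarrow> 'a" where
  "ball_centre r U = (SOME x. x \<in> topspace X \<and> U = gball (r x) x)"

lemma open_cover_ball_cover:
  assumes "\<forall>x\<in>topspace X. 0 < r x"
  shows "open_cover X (ball_cover r)"
proof -
  have "\<Union>(ball_cover r) \<subseteq> topspace X" unfolding ball_cover_def gball_def by auto
  moreover have "x \<in> gball (r x) x" if "x \<in> topspace X" for x
    using centre_in_gball assms that by blast
  ultimately show ?thesis
    unfolding open_cover_def ball_cover_def using openin_gball by blast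
qed

lemma ball_centre:
  assumes "U \<in> ball_cover r"
  shows "ball_centre r U \<in> topspace X" "U = gball (r (ball_centre r U)) (ball_centre r U)"
proof -
  have "\<exists>x. x \<in> topspace X \<and> U = gball (r x) x" using assms unfolding ball_cover_def by blast
  then show "ball_centre r U \<in> topspace X" "U = gball (r (ball_centre r U)) (ball_centre r U)"
    unfolding ball_centre_def by (metis (mono_tags, lifting) someI_ex)+
qed

lemma nested_UV_covers:
  "\<exists>(\<U> :: nat \<Rightarrow> 'a set set) (\<Phi> :: nat \<Rightarrow> 'a set \<Rightarrow> 'b set) (\<Psi> :: nat \<Rightarrow> 'a set \<Rightarrow> 'b set).
     (\<forall>n. open_cover X (\<U> n) \<and> (\<forall>U\<in>\<U> n. \<Phi> n U \<noteq> {} \<and> \<Psi> n U \<noteq> {})) \<and>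
     (\<forall>n. \<forall>U\<in>\<U> n. R (\<Phi> n U) (\<Psi> n U) \<and> (\<forall>p\<in>U. \<Psi> n U \<subseteq> nbhd (\<epsilon> p) (\<phi> p))) \<and>
     (\<forall>n k. \<forall>U\<in>\<U> n. \<forall>V\<in>\<U> k. k > n \<and> V \<inter> U \<noteq> {} \<longrightarrow> \<Psi> k V \<subseteq> \<Phi> n U)"
proof -
  obtain S t :: "nat \<Rightarrow> 'a \<Rightarrow> real" where S_\<epsilon>: "\<And>n x. x \<in> topspace X \<Longrightarrow> S n x \<le> \<epsilon> x / 2"
    and t_lip: "\<And>n. positive_lipschitz (t n)"
    and t_UV: "\<And>n x. x \<in> topspace X \<Longrightarrow> UV_radius (S n) x (t n x)"
    and S_t: "\<And>n k x. x \<in> topspace X \<Longrightarrow> n < k \<Longrightarrow> S k x \<le> t n x / 4"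
    using radius_sequence by blast
  define r where "r n x = t n x / 8" for n x
  define \<U> where "\<U> n = ball_cover (r n)" for n
  define c where "c n = ball_centre (r n)" for n
  define \<Phi> where "\<Phi> n U = nbhd (t n (c n U)) (\<phi> (c n U))" for n U
  define \<Psi> where "\<Psi> n U = nbhd (S n (c n U)) (\<phi> (c n U))" for n U
  have r_pos: "\<forall>x\<in>topspace X. 0 < r n x" for n
    using positive_lipschitz_pos[OF t_lip] unfolding r_def by simp
  have c: "c n U \<in> topspace X" "U = gball (r n (c n U)) (c n U)" if "U \<in> \<U> n" for n U
    using ball_centre that unfolding c_def \<U>_def by blast+
  have covers: "open_cover X (\<U> n)" for n
    unfolding \<U>_def using r_pos by (rule open_cover_ball_cover)
  have cover_values: "\<Phi> n U \<noteq> {} \<and> \<Psi> n U \<noteq> {} \<and> R (\<Phi> n U) (\<Psi> n U)" if U: "U \<in> \<U> n" for n U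
  proof -
    have "\<phi> (c n U) \<noteq> {}" using \<phi>_nonempty c(1)[OF U] unfolding set_valued_on_def by blast
    then show ?thesis
      using t_UV[OF c(1)[OF U], of n] nbhd_eq_empty_iff
      unfolding UV_radius_def \<Phi>_def \<Psi>_def by auto
  qed
  have small: "\<Psi> n U \<subseteq> nbhd (\<epsilon> p) (\<phi> p)" if U: "U \<in> \<U> n" and "p \<in> U" for n U p
  proof -
    define x where "x = c n U"
    have x: "x \<in> topspace X" using c(1)[OF U] unfolding x_def .
    obtain a where a: "a < r n x" "near a x p" "p \<in> topspace X"
      using \<open>p \<in> U\<close> c(2)[OF U] unfolding x_def gball_def by blast
    have "\<Psi> n U \<subseteq> nbhd (S n x + a) (\<phi> p)"
      unfolding \<Psi>_def x_def[symmetric] using near_nbhd_subset near_sym a(2) by blast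
    also have "\<dots> \<subseteq> nbhd (\<epsilon> p) (\<phi> p)"
    proof (rule nbhd_mono)
      have "\<epsilon> x \<le> \<epsilon> p + a" using positive_lipschitzD[OF positive_lipschitz_\<epsilon> x a(3,2)] .
      moreover have "t n x \<le> S n x / 4" "0 < t n x" using t_UV[OF x] unfolding UV_radius_def by auto
      ultimately show "S n x + a \<le> \<epsilon> p" using S_\<epsilon>[OF x, where n = n] a(1) unfolding r_def by linarith
    qed simp
    finally show ?thesis .
  qed
  have nested: "\<Psi> k V \<subseteq> \<Phi> n U"
    if U: "U \<in> \<U> n" and V: "V \<in> \<U> k" and "n < k" and "V \<inter> U \<noteq> {}" for n k U V
  proof -
    define x y where "x = c n U" and "y = c k V"
    have x: "x \<in> topspace X" and y: "y \<in> topspace X"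
      using c(1)[OF U] c(1)[OF V] unfolding x_def y_def .
    obtain z where "z \<in> gball (r n x) x" "z \<in> gball (r k y) y"
      using \<open>V \<inter> U \<noteq> {}\<close> c(2)[OF U] c(2)[OF V] unfolding x_def y_def by auto
    then obtain a where a: "a < r n x + r k y" "near a x y" using gball_overlap by blast
    have "\<Psi> k V \<subseteq> nbhd (S k y + a) (\<phi> x)"
      unfolding \<Psi>_def y_def[symmetric] using near_nbhd_subset[OF a(2)] .
    also have "\<dots> \<subseteq> \<Phi> n U"
      unfolding \<Phi>_def x_def[symmetric]
    proof (rule nbhd_mono)
      have "t n y \<le> t n x + a" using positive_lipschitzD[OF t_lip y x near_sym[OF a(2)]] .
      moreover have "S k y \<le> t n y / 4" using S_t[OF y \<open>n < k\<close>] .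
      moreover have "t k y \<le> S k y / 4" "0 < t n x"
        using t_UV[OF y, of k] positive_lipschitz_pos[OF t_lip x] unfolding UV_radius_def by auto
      ultimately show "S k y + a \<le> t n x" using a(1) unfolding r_def by linarith
    qed simp
    finally show ?thesis .
  qed
  show ?thesis
    by (intro exI[of _ \<U>] exI[of _ \<Phi>] exI[of _ \<Psi>]) (use covers cover_values small nested in blast)
qed

end

theorem theorem2p1:
  fixes X :: "'a topology"
    and R :: "'b::metric_space set \<Rightarrow> 'b set \<Rightarrow> bool"
    and \<phi> :: "'a \<Rightarrow> 'b set"
    and \<epsilon> :: "'a \<Rightarrow> real"
  assumes "monotone_embedding R"
    and "paracompact_space X"
    and "set_valued_on X \<phi>"
    and "rho_continuous X \<phi>"
    and "\<forall>x\<in>topspace X. uniformly_UV R (\<phi> x)"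
    and "continuous_map X euclideanreal \<epsilon>"
    and "\<forall>x\<in>topspace X. \<epsilon> x > 0"
  shows "\<exists>(\<U> :: nat \<Rightarrow> 'a set set) (\<Phi> :: nat \<Rightarrow> 'a set \<Rightarrow> 'b set) (\<Psi> :: nat \<Rightarrow> 'a set \<Rightarrow> 'b set).
           (\<forall>n. open_cover X (\<U> n) \<and>
                (\<forall>U\<in>\<U> n. \<Phi> n U \<noteq> {} \<and> \<Psi> n U \<noteq> {})) \<and>
           (\<forall>n. \<forall>U\<in>\<U> n.
                R (\<Phi> n U) (\<Psi> n U) \<and> (\<forall>p\<in>U. \<Psi> n U \<subseteq> nbhd (\<epsilon> p) (\<phi> p))) \<and>
           (\<forall>n k. \<forall>U\<in>\<U> n. \<forall>V\<in>\<U> k. k > n \<and> V \<inter> U \<noteq> {} \<longrightarrow> \<Psi> k V \<subseteq> \<Phi> n U)"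
proof -
  interpret UV_setting X R \<phi> \<epsilon>
    using assms by unfold_locales auto
  show ?thesis by (rule nested_UV_covers)
qed

end
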